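(* Let $Q,P,t,V_1,V_2,\gamma$ and the points $X_q,X_p$ be as in the context. Then $$Q(X_p)P(X_p)+\int_{X_p}^{X_q}P\,dQ \;=\; Q(X_q)P(X_q)+\int_{X_q}^{X_p}Q\,dP \;=\; \big(PQ-V_1(Q)-V_2(P)\big)_0+2t\ln\gamma .$$ This common value is denoted $\mu$.
   Context: Fix integers $d_1,d_2\ge 1$. For complex parameters $\gamma\neq 0$, $\alpha_0,\dots,\alpha_{d_2}$, $\beta_0,\dots,\beta_{d_1}$ put $Q(\lambda)=\gamma\lambda+\sum_{j=0}^{d_2}\alpha_j\lambda^{-j}$ and $P(\lambda)=\frac{\gamma}{\lambda}+\sum_{j=0}^{d_1}\beta_j\lambda^j$, meromorphic functions on the Riemann sphere of $\lambda$. Write $\infty_Q$ for $\lambda=\infty$ and $\infty_P$ for $\lambda=0$. All residues $\mathrm{res}_p\,\omega$ are ordinary residues of meromorphic differentials at the point $p$ (so $\mathrm{res}_{\lambda=\infty}\frac{d\lambda}{\lambda}=-1$). Define $t=\mathrm{res}_{\infty_Q}P\,dQ$ $(=\mathrm{res}_{\infty_P}Q\,dP)$, $u_K=-\mathrm{res}_{\infty_Q}PQ^{-K}dQ$ for $1\le K\le d_1+1$, $v_J=-\mathrm{res}_{\infty_P}QP^{-J}dP$ for $1\le J\le d_2+1$, and $V_1(x)=\sum_{K=1}^{d_1+1}\frac{u_K}{K}x^K$, $V_2(y)=\sum_{J=1}^{d_2+1}\frac{v_J}{J}y^J$; thus $P=V_1'(Q)-\frac tQ+O(Q^{-2})$ near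 $\infty_Q$ and $Q=V_2'(P)-\frac tP+O(P^{-2})$ near $\infty_P$. For a Laurent polynomial $f(\lambda)$, $(f)_0$ denotes its coefficient of $\lambda^0$. The points $X_q,X_p\in\mathbb C^*$ (values of $\lambda$) are defined implicitly by requiring $-V_1(Q(\lambda))+t\ln Q(\lambda)+\int_{X_q}^{\lambda}P\,dQ=O(\lambda^{-1})$ as $\lambda\to\infty$ and $-V_2(P(\lambda))+t\ln P(\lambda)+\int_{X_p}^{\lambda}Q\,dP=O(\lambda)$ as $\lambda\to 0$, for fixed compatible choices of integration paths in $\mathbb C^*$ and of branches of the logarithms (used consistently throughout). *)

theory Defs
  imports "HOL-Complex_Analysis.Complex_Analysis"
begin

definition Qfun :: "complex \<Rightarrow> (nat \<Rightarrow> complex) \<Rightarrow> nat \<Rightarrow> complex \<Rightarrow> complex" where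
  "Qfun \<gamma> \<alpha> d2 = (\<lambda>l. \<gamma> * l + (\<Sum>j\<le>d2. \<alpha> j / l ^ j))"

definition Pfun :: "complex \<Rightarrow> (nat \<Rightarrow> complex) \<Rightarrow> nat \<Rightarrow> complex \<Rightarrow> complex" where
  "Pfun \<gamma> \<beta> d1 = (\<lambda>l. \<gamma> / l + (\<Sum>j\<le>d1. \<beta> j * l ^ j))"

text \<open>Residue at lambda = infinity of the differential f(lambda) d lambda, computed in the
  chart w = 1/lambda: f(lambda) d lambda = - f(1/w) / w^2 dw.\<close>
definition res_inf :: "(complex \<Rightarrow> complex) \<Rightarrow> complex" where
  "res_inf f = residue (\<lambda>w. - f (1 / w) / w ^ 2) 0"

definition laurent_coeff0 :: "(complex \<Rightarrow> complex) \<Rightarrow> complex" where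
  "laurent_coeff0 f = (THE c. \<exists>(a::int \<Rightarrow> complex) (N::nat).
      (\<forall>l. l \<noteq> 0 \<longrightarrow> f l = (\<Sum>k\<in>{- int N..int N}. a k * l powi k)) \<and> a 0 = c)"

end

theory Submission
  imports Defs "HOL-Computational_Algebra.Polynomial"
begin

(*
  Work in the logarithmic coordinate lambda = exp w, in which the 1-forms P dQ and Q dP have
  entire primitives Gq and Gp, and integration by parts gives Gq + Gp - (P Q)(exp w) = K.
  The function Gq w + t w - V1 (Q (exp w)) has a constant increment over the period 2 pi i; the
  decay condition defining X_q says that it converges to Gq(zq) - t lg uniformly on the vertical
  lines Re w = x as x tends to +infinity (the term t Ln (Q / (gamma lambda)) tends to 0), so
  the increment vanishes and its mean over a vertical period is that limit.  Symmetrically,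
  Gp w - t w - V2 (P (exp w)) has mean Gp(zp) - t lg (now Re w tends to -infinity).  Their sum
  minus K is (P Q - V1(Q) - V2(P))(exp w), whose mean over a period is its constant Laurent
  coefficient; both identities follow.
*)

definition laurent_poly :: "(complex \<Rightarrow> complex) \<Rightarrow> bool" where
  "laurent_poly f \<longleftrightarrow> (\<exists>p N. \<forall>l. l \<noteq> 0 \<longrightarrow> f l = poly p l / l ^ N)"

lemma laurent_poly_inverse_power: "laurent_poly (\<lambda>l. c / l ^ j)"
  unfolding laurent_poly_def by (intro exI[of _ "[:c:]"] exI[of _ j]) simp

lemma laurent_poly_const: "laurent_poly (\<lambda>l. c)"
  using laurent_poly_inverse_power[of c 0] by simp

lemma laurent_poly_ident: "laurent_poly (\<lambda>l. l)"
  unfolding laurent_poly_def by (intro exI[of _ "[:0, 1:]"] exI[of _ 0]) simp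

lemma laurent_poly_add:
  assumes "laurent_poly f" "laurent_poly g"
  shows "laurent_poly (\<lambda>l. f l + g l)"
proof -
  obtain p N where p: "\<forall>l. l \<noteq> 0 \<longrightarrow> f l = poly p l / l ^ N"
    using assms(1) laurent_poly_def by blast
  obtain q M where q: "\<forall>l. l \<noteq> 0 \<longrightarrow> g l = poly q l / l ^ M"
    using assms(2) laurent_poly_def by blast
  show ?thesis unfolding laurent_poly_def
    by (intro exI[of _ "p * monom 1 M + q * monom 1 N"] exI[of _ "N + M"])
       (auto simp: p q poly_monom field_simps power_add)
qed

lemma laurent_poly_mult:
  assumes "laurent_poly f" "laurent_poly g"
  shows "laurent_poly (\<lambda>l. f l * g l)"
proof -
  obtain p N where p: "\<forall>l. l \<noteq> 0 \<longrightarrow> f l = poly p l / l ^ N"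
    using assms(1) laurent_poly_def by blast
  obtain q M where q: "\<forall>l. l \<noteq> 0 \<longrightarrow> g l = poly q l / l ^ M"
    using assms(2) laurent_poly_def by blast
  show ?thesis unfolding laurent_poly_def
    by (intro exI[of _ "p * q"] exI[of _ "N + M"]) (auto simp: p q power_add)
qed

lemma laurent_poly_diff:
  assumes "laurent_poly f" "laurent_poly g"
  shows "laurent_poly (\<lambda>l. f l - g l)"
  using laurent_poly_add[OF assms(1) laurent_poly_mult[OF laurent_poly_const assms(2)], of "- 1"]
  by simp

lemma laurent_poly_sum:
  assumes "finite S" "\<And>i. i \<in> S \<Longrightarrow> laurent_poly (f i)"
  shows "laurent_poly (\<lambda>l. \<Sum>i\<in>S. f i l)"
  using assms by (induction S rule: finite_induct) (auto intro: laurent_poly_add laurent_poly_const)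

lemma laurent_poly_power:
  assumes "laurent_poly f"
  shows "laurent_poly (\<lambda>l. f l ^ n)"
  by (induction n) (auto intro: laurent_poly_mult laurent_poly_const assms)

lemmas laurent_poly_intros =
  laurent_poly_const laurent_poly_ident laurent_poly_inverse_power laurent_poly_add
  laurent_poly_diff laurent_poly_mult laurent_poly_sum laurent_poly_power

lemma laurent_poly_Qfun: "laurent_poly (Qfun \<gamma> \<alpha> d)"
  unfolding Qfun_def by (intro laurent_poly_intros) auto

lemma laurent_poly_Pfun: "laurent_poly (Pfun \<gamma> \<beta> d)"
proof -
  have "laurent_poly (\<lambda>l. \<gamma> / l ^ 1 + (\<Sum>j\<le>d. \<beta> j * l ^ j))"
    by (intro laurent_poly_intros) auto
  then show ?thesis by (simp add: Pfun_def)
qed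

lemma laurent_poly_holomorphic:
  assumes "laurent_poly f"
  shows "f holomorphic_on -{0}"
proof -
  obtain p N where p: "\<forall>l. l \<noteq> 0 \<longrightarrow> f l = poly p l / l ^ N"
    using assms laurent_poly_def by blast
  have "(\<lambda>l. poly p l / l ^ N) holomorphic_on -{0}"
    by (intro holomorphic_intros) auto
  then show ?thesis
    by (rule holomorphic_transform) (use p in auto)
qed

lemma laurent_poly_powi_expansion:
  assumes "laurent_poly f"
  obtains a N where "\<And>l. l \<noteq> 0 \<Longrightarrow> f l = (\<Sum>k\<in>{- int N..int N}. a k * l powi k)"
proof -
  obtain p N where p: "\<forall>l. l \<noteq> 0 \<longrightarrow> f l = poly p l / l ^ N"
    using assms laurent_poly_def by blast
  define D where "D = degree p + N"
  define a where "a k = (if 0 \<le> k + int N then coeff p (nat (k + int N)) else 0)" for k :: int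
  have "f l = (\<Sum>k\<in>{- int D..int D}. a k * l powi k)" if l: "l \<noteq> 0" for l
  proof -
    have "poly p l = (\<Sum>i\<le>D + N. coeff p i * l ^ i)"
      unfolding poly_altdef by (rule sum.mono_neutral_left) (auto simp: D_def coeff_eq_0)
    then have "f l = (\<Sum>i\<le>D + N. coeff p i * l powi (int i - int N))"
      using p l by (simp add: sum_divide_distrib power_int_diff)
    also have "\<dots> = (\<Sum>i\<in>{0..D + N}. a (int i - int N) * l powi (int i - int N))"
      by (intro sum.cong) (auto simp: a_def)
    also have "\<dots> = (\<Sum>k\<in>(\<lambda>i. int i - int N) ` {0..D + N}. a k * l powi k)"
      by (rule sum.reindex[symmetric, unfolded o_def]) (auto simp: inj_on_def)
    also have "(\<lambda>i. int i - int N) ` {0..D + N} = {- int N..int D}"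
    proof (intro set_eqI iffI)
      fix k assume "k \<in> {- int N..int D}"
      then show "k \<in> (\<lambda>i. int i - int N) ` {0..D + N}"
        by (intro image_eqI[of _ _ "nat (k + int N)"]) auto
    qed auto
    also have "(\<Sum>k\<in>{- int N..int D}. a k * l powi k) = (\<Sum>k\<in>{- int D..int D}. a k * l powi k)"
      by (rule sum.mono_neutral_left) (auto simp: a_def D_def)
    finally show ?thesis .
  qed
  then show ?thesis using that by blast
qed

lemma has_contour_integral_exp_powi:
  "((\<lambda>w. exp w powi k) has_contour_integral (if k = 0 then 2 * pi * \<i> else 0))
     (linepath a (a + 2 * pi * \<i>))"
proof (cases "k = 0")
  case True
  have "((\<lambda>w. 1) has_contour_integral 1 * (a + 2 * pi * \<i> - a)) (linepath a (a + 2 * pi * \<i>))"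
    by (rule has_contour_integral_const_linepath)
  then show ?thesis
    using True by simp
next
  case False
  define \<Phi> where "\<Phi> w = exp (of_int k * w) / of_int k" for w :: complex
  have "(\<Phi> has_field_derivative exp w powi k) (at w within UNIV)" for w
    unfolding \<Phi>_def using False
    by (auto intro!: derivative_eq_intros simp: exp_power_int mult.commute)
  from contour_integral_primitive[OF this valid_path_linepath]
  have "((\<lambda>w. exp w powi k) has_contour_integral \<Phi> (a + 2 * pi * \<i>) - \<Phi> a)
          (linepath a (a + 2 * pi * \<i>))"
    by simp
  moreover have "exp (of_int k * (a + 2 * pi * \<i>)) = exp (of_int k * a)"
    using exp_plus_2pin[of "of_int k * a" k] by (simp add: algebra_simps)
  ultimately show ?thesis
    using False by (simp add: \<Phi>_def)
qed

lemma has_contour_integral_powi_sum_exp: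
  "((\<lambda>w. \<Sum>k\<in>{- int N..int N}. a k * exp w powi k) has_contour_integral 2 * pi * \<i> * a 0)
     (linepath b (b + 2 * pi * \<i>))"
proof -
  have "((\<lambda>w. \<Sum>k\<in>{- int N..int N}. a k * exp w powi k) has_contour_integral
          (\<Sum>k\<in>{- int N..int N}. a k * (if k = 0 then 2 * pi * \<i> else 0)))
          (linepath b (b + 2 * pi * \<i>))"
    by (intro has_contour_integral_sum has_contour_integral_lmul has_contour_integral_exp_powi) auto
  also have "(\<Sum>k\<in>{- int N..int N}. a k * (if k = 0 then 2 * pi * \<i> else 0)) = 2 * pi * \<i> * a 0"
    by (simp add: if_distrib cong: if_cong)
  finally show ?thesis .
qed

lemma laurent_coeff0_eq:
  assumes "\<And>l. l \<noteq> 0 \<Longrightarrow> f l = (\<Sum>k\<in>{- int N..int N}. a k * l powi k)"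
  shows "laurent_coeff0 f = a 0"
  unfolding laurent_coeff0_def
proof (rule the_equality)
  show "\<exists>a' N'. (\<forall>l. l \<noteq> 0 \<longrightarrow> f l = (\<Sum>k\<in>{- int N'..int N'}. a' k * l powi k)) \<and> a' 0 = a 0"
    using assms by blast
next
  fix c
  assume "\<exists>a' N'. (\<forall>l. l \<noteq> 0 \<longrightarrow> f l = (\<Sum>k\<in>{- int N'..int N'}. a' k * l powi k)) \<and> a' 0 = c"
  then obtain a' N' where a': "\<And>l. l \<noteq> 0 \<Longrightarrow> f l = (\<Sum>k\<in>{- int N'..int N'}. a' k * l powi k)"
    and c: "a' 0 = c"
    by blast
  have "((\<lambda>w. f (exp w)) has_contour_integral 2 * pi * \<i> * a 0) (linepath 0 (0 + 2 * pi * \<i>))"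
    using has_contour_integral_powi_sum_exp[of a N] by (rule has_contour_integral_eq) (simp add: assms)
  moreover have "((\<lambda>w. f (exp w)) has_contour_integral 2 * pi * \<i> * a' 0) (linepath 0 (0 + 2 * pi * \<i>))"
    using has_contour_integral_powi_sum_exp[of a' N'] by (rule has_contour_integral_eq) (simp add: a')
  ultimately show "c = a 0"
    using c has_contour_integral_unique by fastforce
qed

lemma has_contour_integral_laurent_poly_exp:
  assumes "laurent_poly f"
  shows "((\<lambda>w. f (exp w)) has_contour_integral 2 * pi * \<i> * laurent_coeff0 f)
           (linepath a (a + 2 * pi * \<i>))"
proof -
  obtain c N where c: "\<And>l. l \<noteq> 0 \<Longrightarrow> f l = (\<Sum>k\<in>{- int N..int N}. c k * l powi k)"
    using laurent_poly_powi_expansion[OF assms] by blast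
  have "((\<lambda>w. f (exp w)) has_contour_integral 2 * pi * \<i> * c 0) (linepath a (a + 2 * pi * \<i>))"
    using has_contour_integral_powi_sum_exp[of c N] by (rule has_contour_integral_eq) (simp add: c)
  then show ?thesis
    by (simp add: laurent_coeff0_eq[OF c])
qed

lemma laurent_coeff0_eq_if_has_contour_integral:
  assumes "laurent_poly f"
    and "((\<lambda>w. f (exp w)) has_contour_integral 2 * pi * \<i> * c) (linepath a (a + 2 * pi * \<i>))"
  shows "laurent_coeff0 f = c"
  using has_contour_integral_unique[OF has_contour_integral_laurent_poly_exp[OF assms(1)] assms(2)]
  by simp

lemma exp_linepath_primitive:
  assumes "f holomorphic_on -{0}"
  obtains G where "\<And>w. (G has_field_derivative f (exp w) * exp w) (at w)"
    and "\<And>a b. contour_integral (\<lambda>s. exp (linepath a b s)) f = G b - G a"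
proof -
  have "(f \<circ> exp) holomorphic_on UNIV"
    by (rule holomorphic_on_compose_gen[OF holomorphic_on_exp assms]) auto
  then have "(\<lambda>w. f (exp w) * exp w) holomorphic_on UNIV"
    by (auto intro!: holomorphic_intros simp: o_def)
  then obtain G where "\<And>w. w \<in> UNIV \<Longrightarrow> (G has_field_derivative f (exp w) * exp w) (at w within UNIV)"
    using holomorphic_convex_primitive'[OF convex_UNIV open_UNIV] by blast
  then have G: "\<And>w. (G has_field_derivative f (exp w) * exp w) (at w)"
    by simp
  have "contour_integral (exp \<circ> linepath a b) f = G b - G a" for a b
  proof -
    have "contour_integral (exp \<circ> linepath a b) f
            = contour_integral (linepath a b) (\<lambda>w. deriv exp w * f (exp w))"
      by (rule contour_integral_comp_analyticW) (auto intro: analytic_intros)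
    also have "\<dots> = G b - G a"
      using contour_integral_primitive[of UNIV G "\<lambda>w. deriv exp w * f (exp w)" "linepath a b"] G
      by (simp add: DERIV_imp_deriv[OF DERIV_exp] contour_integral_unique mult.commute)
    finally show ?thesis .
  qed
  then show ?thesis
    using that[OF G] by (simp add: o_def)
qed

lemma primitive_periodic_increment:
  fixes \<Phi> \<phi> :: "'a::real_normed_field \<Rightarrow> 'a"
  assumes "\<And>w. (\<Phi> has_field_derivative \<phi> w) (at w)" and "\<And>w. \<phi> (w + c) = \<phi> w"
  shows "\<Phi> (w + c) - \<Phi> w = \<Phi> c - \<Phi> 0"
proof -
  have "((\<lambda>w. \<Phi> (w + c) - \<Phi> w) has_field_derivative \<phi> (w + c) * (1 + 0) - \<phi> w) (at w)" for w
    by (intro DERIV_diff DERIV_chain2[OF assms(1)] DERIV_add DERIV_ident DERIV_const assms(1))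
  then have "((\<lambda>w. \<Phi> (w + c) - \<Phi> w) has_field_derivative 0) (at w within UNIV)" for w
    by (simp add: assms(2))
  then have "\<exists>k. \<forall>w\<in>UNIV. \<Phi> (w + c) - \<Phi> w = k"
    by (intro has_field_derivative_zero_constant[OF convex_UNIV])
  then obtain k where "\<And>w. \<Phi> (w + c) - \<Phi> w = k"
    by blast
  then show ?thesis
    by (metis add_0)
qed

lemma increment_eq_0_if_tendsto_filtercomap_Re:
  fixes D :: "complex \<Rightarrow> complex" and F :: "real filter"
  assumes "F \<noteq> bot" "Re p = 0" "\<And>w. D (w + p) - D w = k" "(D \<longlongrightarrow> c) (filtercomap Re F)"
  shows "k = 0"
proof -
  have "filterlim (\<lambda>w. w + p) (filtercomap Re F) (filtercomap Re F)"
    using assms(2) by (simp add: filterlim_filtercomap_iff o_def filterlim_filtercomap)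
  then have "((\<lambda>w. D (w + p) - D w) \<longlongrightarrow> c - c) (filtercomap Re F)"
    by (intro tendsto_diff filterlim_compose[OF assms(4)] assms(4))
  then show ?thesis
    using filtercomap_neq_bot_surj[OF assms(1) surj_Re] by (simp add: assms(3) tendsto_const_iff)
qed

lemma has_contour_integral_vertical_period_tendsto:
  fixes D :: "complex \<Rightarrow> complex" and F :: "real filter"
  assumes "F \<noteq> bot" "D holomorphic_on UNIV" "\<And>w. D (w + 2 * pi * \<i>) = D w"
    and "(D \<longlongrightarrow> c) (filtercomap Re F)"
  shows "(D has_contour_integral 2 * pi * \<i> * c) (linepath a (a + 2 * pi * \<i>))"
proof -
  obtain \<Phi> where "\<And>w. w \<in> UNIV \<Longrightarrow> (\<Phi> has_field_derivative D w) (at w within UNIV)"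
    using holomorphic_convex_primitive'[OF convex_UNIV open_UNIV assms(2)] by blast
  then have \<Phi>: "\<And>w. (\<Phi> has_field_derivative D w) (at w)"
    by simp
  define I where "I = \<Phi> (2 * pi * \<i>) - \<Phi> 0"
  have int: "(D has_contour_integral I) (linepath b (b + 2 * pi * \<i>))" for b
  proof -
    have "(D has_contour_integral \<Phi> (b + 2 * pi * \<i>) - \<Phi> b) (linepath b (b + 2 * pi * \<i>))"
      using contour_integral_primitive[of UNIV \<Phi> D "linepath b (b + 2 * pi * \<i>)"] \<Phi> by simp
    then show ?thesis
      using primitive_periodic_increment[OF \<Phi> assms(3), of b] by (simp add: I_def)
  qed
  \<comment> \<open>On a vertical line where D is uniformly close to c, I is close to 2 pi i c.\<close>
  have "norm (I - 2 * pi * \<i> * c) \<le> 0 + e" if e: "e > 0" for e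
  proof -
    have "eventually (\<lambda>z. dist (D z) c < e / (2 * pi)) (filtercomap Re F)"
      using tendstoD[OF assms(4)] e by simp
    then obtain L where "eventually L F" and L: "\<And>z. L (Re z) \<Longrightarrow> dist (D z) c < e / (2 * pi)"
      unfolding eventually_filtercomap by blast
    then obtain x where "L x"
      using eventually_happens'[OF assms(1)] by blast
    with L have x: "\<And>z. Re z = x \<Longrightarrow> dist (D z) c < e / (2 * pi)"
      by blast
    have "((\<lambda>z. D z - c) has_contour_integral I - c * (x + 2 * pi * \<i> - x))
            (linepath x (x + 2 * pi * \<i>))"
      by (intro has_contour_integral_diff int has_contour_integral_const_linepath)
    moreover have "Re z = x" if "z \<in> closed_segment (of_real x) (x + 2 * pi * \<i>)" for z
      using that by (auto simp: closed_segment_def scaleR_conv_of_real algebra_simps)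
    ultimately have "norm (I - c * (x + 2 * pi * \<i> - x)) \<le> e / (2 * pi) * norm (x + 2 * pi * \<i> - x)"
      using e x by (intro has_contour_integral_bound_linepath) (auto simp: dist_norm less_imp_le)
    then show ?thesis
      by (simp add: norm_mult algebra_simps)
  qed
  then have "I = 2 * pi * \<i> * c"
    using field_le_epsilon[of "norm (I - 2 * pi * \<i> * c)" 0] by simp
  then show ?thesis
    using int by simp
qed

lemma exp_linepath_integration_by_parts:
  assumes f: "f holomorphic_on -{0}" and g: "g holomorphic_on -{0}"
  obtains G H K
  where "\<And>w. (G has_field_derivative f (exp w) * deriv g (exp w) * exp w) (at w)"
    and "\<And>w. (H has_field_derivative g (exp w) * deriv f (exp w) * exp w) (at w)"
    and "\<And>a b. contour_integral (\<lambda>s. exp (linepath a b s)) (\<lambda>l. f l * deriv g l) = G b - G a"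
    and "\<And>a b. contour_integral (\<lambda>s. exp (linepath a b s)) (\<lambda>l. g l * deriv f l) = H b - H a"
    and "\<And>w. G w + H w - f (exp w) * g (exp w) = K"
proof -
  have "(\<lambda>l. f l * deriv g l) holomorphic_on -{0}" and "(\<lambda>l. g l * deriv f l) holomorphic_on -{0}"
    by (intro holomorphic_intros holomorphic_deriv f g; simp add: open_Compl)+
  then obtain G H
    where G: "\<And>w. (G has_field_derivative f (exp w) * deriv g (exp w) * exp w) (at w)"
      and IG: "\<And>a b. contour_integral (\<lambda>s. exp (linepath a b s)) (\<lambda>l. f l * deriv g l) = G b - G a"
      and H: "\<And>w. (H has_field_derivative g (exp w) * deriv f (exp w) * exp w) (at w)"
      and IH: "\<And>a b. contour_integral (\<lambda>s. exp (linepath a b s)) (\<lambda>l. g l * deriv f l) = H b - H a"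
    by (elim exp_linepath_primitive) blast
  have chain: "((\<lambda>w. u (exp w)) has_field_derivative deriv u (exp w) * exp w) (at w)"
    if "u holomorphic_on -{0}" for u :: "complex \<Rightarrow> complex" and w
    using DERIV_chain2[OF holomorphic_derivI[OF that] DERIV_exp] by (simp add: open_Compl)
  have "((\<lambda>w. G w + H w - f (exp w) * g (exp w)) has_field_derivative 0) (at w within UNIV)" for w
    using DERIV_diff[OF DERIV_add[OF G H] DERIV_mult[OF chain[OF f] chain[OF g]]]
    by (simp add: algebra_simps)
  then have "\<exists>K. \<forall>w\<in>UNIV. G w + H w - f (exp w) * g (exp w) = K"
    by (intro has_field_derivative_zero_constant[OF convex_UNIV])
  then obtain K where "\<And>w. G w + H w - f (exp w) * g (exp w) = K"
    by blast
  from that[OF G H IG IH this] show ?thesis .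
qed

lemma has_contour_integral_log_coordinate_period:
  fixes F :: "real filter"
  assumes "F \<noteq> bot" and G: "\<And>w. (G has_field_derivative f (exp w) * exp w) (at w)"
    and V: "V holomorphic_on -{0}"
    and lim: "((\<lambda>w. G w + s * w - V (exp w)) \<longlongrightarrow> c) (filtercomap Re F)"
  shows "((\<lambda>w. G w + s * w - V (exp w)) has_contour_integral 2 * pi * \<i> * c)
           (linepath a (a + 2 * pi * \<i>))"
proof -
  define D where "D w = G w + s * w - V (exp w)" for w
  have exp_period: "exp (w + 2 * pi * \<i>) = exp w" for w :: complex
    by (simp add: exp_add)
  have "f (exp (w + 2 * pi * \<i>)) * exp (w + 2 * pi * \<i>) = f (exp w) * exp w" for w
    by (simp only: exp_period)
  from primitive_periodic_increment[OF G this]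
  have incr: "D (w + 2 * pi * \<i>) - D w = G (2 * pi * \<i>) - G 0 + s * (2 * pi * \<i>)" for w
    unfolding D_def exp_period by (simp add: algebra_simps)
  have "(D \<longlongrightarrow> c) (filtercomap Re F)"
    unfolding D_def[abs_def] by (rule lim)
  then have "G (2 * pi * \<i>) - G 0 + s * (2 * pi * \<i>) = 0"
    by (intro increment_eq_0_if_tendsto_filtercomap_Re[where D = D and p = "2 * pi * \<i>", OF assms(1) _ incr])
       simp_all
  with incr have period: "D (w + 2 * pi * \<i>) = D w" for w
    by simp
  have "G holomorphic_on UNIV"
    using G by (auto simp: holomorphic_on_def field_differentiable_def)
  moreover have "(V \<circ> exp) holomorphic_on UNIV"
    by (rule holomorphic_on_compose_gen[OF holomorphic_on_exp V]) auto
  ultimately have "D holomorphic_on UNIV"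
    unfolding D_def[abs_def] by (auto intro!: holomorphic_intros simp: o_def)
  from has_contour_integral_vertical_period_tendsto[OF assms(1) this period]
  show ?thesis
    using lim by (simp add: D_def[abs_def])
qed

lemma has_contour_integral_period_if_decay_Re_at_top:
  fixes G V r :: "complex \<Rightarrow> complex"
  assumes G: "\<And>w. (G has_field_derivative f (exp w) * exp w) (at w)"
    and V: "V holomorphic_on -{0}" and r: "(r \<longlongrightarrow> 1) at_infinity"
    and bound: "\<exists>C R. \<forall>z. R \<le> Re z \<longrightarrow>
      norm (- V (exp z) + t * (lg + z + Ln (r (exp z))) + (G z - G z0)) \<le> C * exp (- Re z)"
  shows "((\<lambda>w. G w + t * w - V (exp w)) has_contour_integral 2 * pi * \<i> * (G z0 - t * lg))
           (linepath a (a + 2 * pi * \<i>))"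
proof -
  define E where "E z = - V (exp z) + t * (lg + z + Ln (r (exp z))) + (G z - G z0)" for z
  obtain C R where CR: "\<And>z. R \<le> Re z \<Longrightarrow> norm (E z) \<le> C * exp (- Re z)"
    using bound unfolding E_def by blast
  have "((\<lambda>z. C * exp (- Re z)) \<longlongrightarrow> 0) (filtercomap Re at_top)"
    by (intro tendsto_mult_right_zero filterlim_compose[OF exp_at_bot]
          filterlim_compose[OF filterlim_uminus_at_bot_at_top] filterlim_filtercomap)
  then have "(E \<longlongrightarrow> 0) (filtercomap Re at_top)"
    by (rule Lim_null_comparison[rotated])
       (use CR in \<open>auto simp: eventually_filtercomap_at_top_linorder\<close>)
  moreover have "((\<lambda>z. t * Ln (r (exp z))) \<longlongrightarrow> t * Ln 1) (filtercomap Re at_top)"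
    by (intro tendsto_intros filterlim_compose[OF r filterlim_exp_at_infinity_Re_at_top]) auto
  ultimately have "((\<lambda>z. E z - t * Ln (r (exp z))) \<longlongrightarrow> 0) (filtercomap Re at_top)"
    using tendsto_diff by fastforce
  moreover have "E z - t * Ln (r (exp z)) = (G z + t * z - V (exp z)) - (G z0 - t * lg)" for z
    by (simp add: E_def algebra_simps)
  ultimately have "((\<lambda>z. G z + t * z - V (exp z)) \<longlongrightarrow> G z0 - t * lg) (filtercomap Re at_top)"
    by (simp add: LIM_zero_iff)
  from has_contour_integral_log_coordinate_period[OF _ G V this]
  show ?thesis
    by simp
qed

lemma has_contour_integral_period_if_decay_Re_at_bot:
  fixes G V r :: "complex \<Rightarrow> complex"
  assumes G: "\<And>w. (G has_field_derivative f (exp w) * exp w) (at w)"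
    and V: "V holomorphic_on -{0}" and r: "(r \<longlongrightarrow> 1) (at 0)"
    and bound: "\<exists>C R. \<forall>z. Re z \<le> - R \<longrightarrow>
      norm (- V (exp z) + t * (lg - z + Ln (r (exp z))) + (G z - G z0)) \<le> C * exp (Re z)"
  shows "((\<lambda>w. G w - t * w - V (exp w)) has_contour_integral 2 * pi * \<i> * (G z0 - t * lg))
           (linepath a (a + 2 * pi * \<i>))"
proof -
  define E where "E z = - V (exp z) + t * (lg - z + Ln (r (exp z))) + (G z - G z0)" for z
  obtain C R where CR: "\<And>z. Re z \<le> - R \<Longrightarrow> norm (E z) \<le> C * exp (Re z)"
    using bound unfolding E_def by blast
  have "((\<lambda>z. C * exp (Re z)) \<longlongrightarrow> 0) (filtercomap Re at_bot)"
    by (intro tendsto_mult_right_zero filterlim_compose[OF exp_at_bot] filterlim_filtercomap)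
  then have "(E \<longlongrightarrow> 0) (filtercomap Re at_bot)"
    by (rule Lim_null_comparison[rotated])
       (use CR in \<open>auto simp: eventually_filtercomap_at_bot_linorder\<close>)
  moreover have "filterlim exp (at 0) (filtercomap Re at_bot)"
    by (intro filterlim_atI tendsto_exp_0_Re_at_bot) simp
  then have "((\<lambda>z. t * Ln (r (exp z))) \<longlongrightarrow> t * Ln 1) (filtercomap Re at_bot)"
    by (intro tendsto_intros filterlim_compose[OF r]) auto
  ultimately have "((\<lambda>z. E z - t * Ln (r (exp z))) \<longlongrightarrow> 0) (filtercomap Re at_bot)"
    using tendsto_diff by fastforce
  moreover have "E z - t * Ln (r (exp z)) = (G z + (- t) * z - V (exp z)) - (G z0 - t * lg)" for z
    by (simp add: E_def algebra_simps)
  ultimately have "((\<lambda>z. G z + (- t) * z - V (exp z)) \<longlongrightarrow> G z0 - t * lg) (filtercomap Re at_bot)"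
    by (simp add: LIM_zero_iff)
  from has_contour_integral_log_coordinate_period[OF _ G V this]
  show ?thesis
    by simp
qed

lemma Qfun_over_linear_tendsto:
  assumes "\<gamma> \<noteq> 0"
  shows "((\<lambda>l. Qfun \<gamma> \<alpha> d l / (\<gamma> * l)) \<longlongrightarrow> 1) at_infinity"
proof -
  let ?R = "\<lambda>l. 1 + (\<Sum>j\<le>d. \<alpha> j * inverse l ^ j) * inverse l / \<gamma>"
  have "(?R \<longlongrightarrow> 1 + (\<Sum>j\<le>d. \<alpha> j * 0 ^ j) * 0 / \<gamma>) at_infinity"
    by (intro tendsto_intros tendsto_inverse_0 assms)
  moreover have "?R l = Qfun \<gamma> \<alpha> d l / (\<gamma> * l)" if "l \<noteq> 0" for l
    using assms that by (simp add: Qfun_def power_inverse field_simps)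
  then have "eventually (\<lambda>l. ?R l = Qfun \<gamma> \<alpha> d l / (\<gamma> * l)) at_infinity"
    unfolding eventually_at_infinity by (metis norm_zero not_one_le_zero)
  ultimately show ?thesis
    by (simp add: tendsto_cong)
qed

lemma Pfun_times_linear_tendsto:
  assumes "\<gamma> \<noteq> 0"
  shows "((\<lambda>l. Pfun \<gamma> \<beta> d l * l / \<gamma>) \<longlongrightarrow> 1) (at 0)"
proof -
  let ?R = "\<lambda>l. 1 + l * (\<Sum>j\<le>d. \<beta> j * l ^ j) / \<gamma>"
  have "(?R \<longlongrightarrow> 1 + 0 * (\<Sum>j\<le>d. \<beta> j * 0 ^ j) / \<gamma>) (at 0)"
    by (intro tendsto_intros assms)
  moreover have "eventually (\<lambda>l. ?R l = Pfun \<gamma> \<beta> d l * l / \<gamma>) (at 0)"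
    using assms by (auto simp: eventually_at_filter Pfun_def field_simps)
  ultimately show ?thesis
    by (simp add: tendsto_cong)
qed

theorem lemma2p1:
  fixes d1 d2 :: nat and \<gamma> lg zq zp :: complex and \<alpha> \<beta> :: "nat \<Rightarrow> complex"
    and Q P V1 V2 :: "complex \<Rightarrow> complex" and t :: complex
  assumes d1: "d1 \<ge> 1" and d2: "d2 \<ge> 1" and \<gamma>: "\<gamma> \<noteq> 0"
    and lg: "exp lg = \<gamma>"
  defines "Q \<equiv> Qfun \<gamma> \<alpha> d2"
    and "P \<equiv> Pfun \<gamma> \<beta> d1"
    and "t \<equiv> res_inf (\<lambda>l. P l * deriv Q l)"
    and "V1 \<equiv> (\<lambda>x. \<Sum>K=1..d1+1.
            (- res_inf (\<lambda>l. P l * inverse (Q l ^ K) * deriv Q l)) / of_nat K * x ^ K)"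
    and "V2 \<equiv> (\<lambda>y. \<Sum>J=1..d2+1.
            (- residue (\<lambda>l. Q l * inverse (P l ^ J) * deriv P l) 0) / of_nat J * y ^ J)"
  assumes Xq: "\<exists>C R. \<forall>z. R \<le> Re z \<longrightarrow>
      cmod (- V1 (Q (exp z)) + t * (lg + z + Ln (Q (exp z) / (\<gamma> * exp z)))
            + contour_integral (\<lambda>s. exp (linepath zq z s)) (\<lambda>l. P l * deriv Q l))
      \<le> C * exp (- Re z)"
    and Xp: "\<exists>C R. \<forall>z. Re z \<le> - R \<longrightarrow>
      cmod (- V2 (P (exp z)) + t * (lg - z + Ln (P (exp z) * exp z / \<gamma>))
            + contour_integral (\<lambda>s. exp (linepath zp z s)) (\<lambda>l. Q l * deriv P l))
      \<le> C * exp (Re z)"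
  shows "Q (exp zp) * P (exp zp)
           + contour_integral (\<lambda>s. exp (linepath zp zq s)) (\<lambda>l. P l * deriv Q l)
         = laurent_coeff0 (\<lambda>l. P l * Q l - V1 (Q l) - V2 (P l)) + 2 * t * lg
       \<and> Q (exp zq) * P (exp zq)
           + contour_integral (\<lambda>s. exp (linepath zq zp s)) (\<lambda>l. Q l * deriv P l)
         = laurent_coeff0 (\<lambda>l. P l * Q l - V1 (Q l) - V2 (P l)) + 2 * t * lg"
proof -
  define M where "M = (\<lambda>l. P l * Q l - V1 (Q l) - V2 (P l))"
  have lpQ: "laurent_poly Q" and lpP: "laurent_poly P"
    and lpV1: "laurent_poly (\<lambda>l. V1 (Q l))" and lpV2: "laurent_poly (\<lambda>l. V2 (P l))"
    unfolding Q_def P_def V1_def V2_def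
    by (intro laurent_poly_intros laurent_poly_Qfun laurent_poly_Pfun; simp)+
  obtain Gq Gp K
    where Gq: "\<And>w. (Gq has_field_derivative P (exp w) * deriv Q (exp w) * exp w) (at w)"
      and Gp: "\<And>w. (Gp has_field_derivative Q (exp w) * deriv P (exp w) * exp w) (at w)"
      and Iq: "\<And>a b. contour_integral (\<lambda>s. exp (linepath a b s)) (\<lambda>l. P l * deriv Q l) = Gq b - Gq a"
      and Ip: "\<And>a b. contour_integral (\<lambda>s. exp (linepath a b s)) (\<lambda>l. Q l * deriv P l) = Gp b - Gp a"
      and K: "\<And>w. Gq w + Gp w - P (exp w) * Q (exp w) = K"
    using exp_linepath_integration_by_parts[OF lpP[THEN laurent_poly_holomorphic]
        lpQ[THEN laurent_poly_holomorphic]] by blast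
  have "((\<lambda>w. Gq w + t * w - V1 (Q (exp w))) has_contour_integral 2 * pi * \<i> * (Gq zq - t * lg))
          (linepath 0 (0 + 2 * pi * \<i>))"
    using Xq Qfun_over_linear_tendsto[OF \<gamma>, of \<alpha> d2]
    by (intro has_contour_integral_period_if_decay_Re_at_top[OF Gq lpV1[THEN laurent_poly_holomorphic],
          where r = "\<lambda>l. Q l / (\<gamma> * l)"]) (simp_all add: Iq flip: Q_def)
  moreover have "((\<lambda>w. Gp w - t * w - V2 (P (exp w))) has_contour_integral 2 * pi * \<i> * (Gp zp - t * lg))
          (linepath 0 (0 + 2 * pi * \<i>))"
    using Xp Pfun_times_linear_tendsto[OF \<gamma>, of \<beta> d1]
    by (intro has_contour_integral_period_if_decay_Re_at_bot[OF Gp lpV2[THEN laurent_poly_holomorphic],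
          where r = "\<lambda>l. P l * l / \<gamma>"]) (simp_all add: Ip flip: P_def)
  ultimately have "((\<lambda>w. (Gq w + t * w - V1 (Q (exp w))) + (Gp w - t * w - V2 (P (exp w))) - K)
      has_contour_integral 2 * pi * \<i> * (Gq zq - t * lg) + 2 * pi * \<i> * (Gp zp - t * lg)
        - K * (0 + 2 * pi * \<i> - 0)) (linepath 0 (0 + 2 * pi * \<i>))"
    by (intro has_contour_integral_diff has_contour_integral_add has_contour_integral_const_linepath)
  moreover have "(Gq w + t * w - V1 (Q (exp w))) + (Gp w - t * w - V2 (P (exp w))) - K = M (exp w)" for w
    unfolding M_def K[of w, symmetric] by (simp add: algebra_simps)
  ultimately have "((\<lambda>w. M (exp w)) has_contour_integral 2 * pi * \<i> * (Gq zq + Gp zp - 2 * t * lg - K))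
      (linepath 0 (0 + 2 * pi * \<i>))"
    by (simp add: algebra_simps)
  moreover have "laurent_poly M"
    unfolding M_def by (intro laurent_poly_intros lpQ lpP lpV1 lpV2)
  ultimately have "laurent_coeff0 M = Gq zq + Gp zp - 2 * t * lg - K"
    by (intro laurent_coeff0_eq_if_has_contour_integral)
  then show ?thesis
    unfolding Iq Ip M_def[symmetric] using K[of zp] K[of zq] by (intro conjI; algebra)
qed

end
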